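(* Let $\mathbf{b}\in H_{1,2,2}$ be primary. If $\mathbf{b}-1\in I$, then $\overline{\mathbf{b}}$ is primary. If $\mathbf{b}-(1+2\mathbf{v}_3)\in I$, then $-\overline{\mathbf{b}}$ is primary.
   Context: Let $\mathbf{i},\mathbf{j},\mathbf{k}$ be the standard quaternion units; $\overline{\mathbf{q}}=q_1-q_2\mathbf{i}-q_3\mathbf{j}-q_4\mathbf{k}$ is the conjugate of $\mathbf{q}=q_1+q_2\mathbf{i}+q_3\mathbf{j}+q_4\mathbf{k}$. $H_{1,2,2}$ is the subring of the quaternions equal to the $\mathbb{Z}$-module generated by $\mathbf{v}_1=1$, $\mathbf{v}_2=\mathbf{i}$, $\mathbf{v}_3=\tfrac12(1+\mathbf{i}+\sqrt2\,\mathbf{j})$, $\mathbf{v}_4=\tfrac12(1+\mathbf{i}+\sqrt2\,\mathbf{k})$, closed under conjugation. Let $I = 2(1+\mathbf{i})H_{1,2,2}$ (equal to $H_{1,2,2}\,2(1+\mathbf{i})$). An element $\mathbf{q}\in H_{1,2,2}$ is primary if $\mathbf{q}-1\in I$ or $\mathbf{q}-(1+2\mathbf{v}_3)\in I$. *)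

theory Defs
  imports Complex_Main
begin

datatype quat = Quat (re: real) (im_i: real) (im_j: real) (im_k: real)

definition qadd :: "quat \<Rightarrow> quat \<Rightarrow> quat" where
  "qadd p q = Quat (re p + re q) (im_i p + im_i q) (im_j p + im_j q) (im_k p + im_k q)"

definition qneg :: "quat \<Rightarrow> quat" where
  "qneg q = Quat (- re q) (- im_i q) (- im_j q) (- im_k q)"

definition qsub :: "quat \<Rightarrow> quat \<Rightarrow> quat" where
  "qsub p q = qadd p (qneg q)"

definition qmul :: "quat \<Rightarrow> quat \<Rightarrow> quat" where
  "qmul p q = Quat
     (re p * re q - im_i p * im_i q - im_j p * im_j q - im_k p * im_k q)
     (re p * im_i q + im_i p * re q + im_j p * im_k q - im_k p * im_j q)
     (re p * im_j q - im_i p * im_k q + im_j p * re q + im_k p * im_i q)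
     (re p * im_k q + im_i p * im_j q - im_j p * im_i q + im_k p * re q)"

definition qcnj :: "quat \<Rightarrow> quat" where
  "qcnj q = Quat (re q) (- im_i q) (- im_j q) (- im_k q)"

definition qscale :: "int \<Rightarrow> quat \<Rightarrow> quat" where
  "qscale n q = Quat (of_int n * re q) (of_int n * im_i q) (of_int n * im_j q) (of_int n * im_k q)"

definition q1 :: quat where "q1 = Quat 1 0 0 0"
definition qi :: quat where "qi = Quat 0 1 0 0"

definition v1 :: quat where "v1 = q1"
definition v2 :: quat where "v2 = qi"
definition v3 :: quat where "v3 = Quat (1/2) (1/2) (sqrt 2 / 2) 0"
definition v4 :: quat where "v4 = Quat (1/2) (1/2) 0 (sqrt 2 / 2)"

definition H122 :: "quat set" where
  "H122 = {qadd (qadd (qscale a v1) (qscale b v2)) (qadd (qscale c v3) (qscale d v4))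
           | a b c d :: int. True}"

definition I122 :: "quat set" where
  "I122 = {qmul (qscale 2 (qadd q1 qi)) x | x. x \<in> H122}"

definition primary :: "quat \<Rightarrow> bool" where
  "primary q \<longleftrightarrow> q \<in> H122 \<and>
     (qsub q q1 \<in> I122 \<or> qsub q (qadd q1 (qscale 2 v3)) \<in> I122)"

end

theory Submission
  imports Defs
begin

text \<open>Conjugation maps \<open>H\<^sub>1\<^sub>2\<^sub>2\<close> and the ideal \<open>I\<close> onto themselves and fixes 1, which settles
  the first case. For the second, with \<open>c = 1 + 2 v\<^sub>3\<close> one has
  \<open>-conj b - c = -(conj (b - c) + (c + conj c))\<close>, and \<open>c + conj c = 4 = 2(1+i)(1-i)\<close> lies in \<open>I\<close>.\<close>

text \<open>The element \<open>a v\<^sub>1 + b v\<^sub>2 + c v\<^sub>3 + d v\<^sub>4\<close> in quaternion coordinates.\<close>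
definition H122_coord :: "int \<Rightarrow> int \<Rightarrow> int \<Rightarrow> int \<Rightarrow> quat" where
  "H122_coord a b c d = Quat (of_int a + of_int c / 2 + of_int d / 2)
     (of_int b + of_int c / 2 + of_int d / 2) (of_int c * sqrt 2 / 2) (of_int d * sqrt 2 / 2)"

lemma mem_H122_iff: "q \<in> H122 \<longleftrightarrow> (\<exists>a b c d. q = H122_coord a b c d)"
  unfolding H122_def H122_coord_def qadd_def qscale_def v1_def v2_def v3_def v4_def q1_def qi_def
  by (auto simp: field_simps)

lemma mem_I122_iff: "q \<in> I122 \<longleftrightarrow> (\<exists>a b c d. q = qmul (Quat 2 2 0 0) (H122_coord a b c d))"
proof -
  have "qscale 2 (qadd q1 qi) = Quat 2 2 0 0"
    by (simp add: qscale_def qadd_def q1_def qi_def)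
  then show ?thesis
    unfolding I122_def mem_H122_iff by (simp only:) blast
qed

lemma qcnj_mem_H122: "x \<in> H122 \<Longrightarrow> qcnj x \<in> H122"
proof -
  assume "x \<in> H122"
  then obtain a b c d where "x = H122_coord a b c d"
    by (auto simp: mem_H122_iff)
  then have "qcnj x = H122_coord (a + c + d) (- b) (- c) (- d)"
    by (simp add: qcnj_def H122_coord_def algebra_simps)
  then show ?thesis
    by (auto simp: mem_H122_iff)
qed

lemma qneg_mem_H122: "x \<in> H122 \<Longrightarrow> qneg x \<in> H122"
proof -
  assume "x \<in> H122"
  then obtain a b c d where "x = H122_coord a b c d"
    by (auto simp: mem_H122_iff)
  then have "qneg x = H122_coord (- a) (- b) (- c) (- d)"
    by (simp add: qneg_def H122_coord_def algebra_simps)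
  then show ?thesis
    by (auto simp: mem_H122_iff)
qed

lemma qadd_mem_I122: "x \<in> I122 \<Longrightarrow> y \<in> I122 \<Longrightarrow> qadd x y \<in> I122"
proof -
  assume "x \<in> I122" "y \<in> I122"
  then obtain a b c d a' b' c' d' where
    "x = qmul (Quat 2 2 0 0) (H122_coord a b c d)"
    "y = qmul (Quat 2 2 0 0) (H122_coord a' b' c' d')"
    by (auto simp: mem_I122_iff)
  then have "qadd x y = qmul (Quat 2 2 0 0) (H122_coord (a + a') (b + b') (c + c') (d + d'))"
    by (simp add: qadd_def qmul_def H122_coord_def field_simps)
  then show ?thesis
    unfolding mem_I122_iff by blast
qed

lemma qneg_mem_I122: "x \<in> I122 \<Longrightarrow> qneg x \<in> I122"
proof -
  assume "x \<in> I122"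
  then obtain a b c d where "x = qmul (Quat 2 2 0 0) (H122_coord a b c d)"
    by (auto simp: mem_I122_iff)
  then have "qneg x = qmul (Quat 2 2 0 0) (H122_coord (- a) (- b) (- c) (- d))"
    by (simp add: qneg_def qmul_def H122_coord_def algebra_simps)
  then show ?thesis
    unfolding mem_I122_iff by blast
qed

text \<open>Since \<open>conj (2(1+i)) = -i \<cdot> 2(1+i)\<close>, the right ideal \<open>I\<close> is also a left ideal and hence
  closed under conjugation.\<close>
lemma qcnj_mem_I122: "x \<in> I122 \<Longrightarrow> qcnj x \<in> I122"
proof -
  assume "x \<in> I122"
  then obtain a b c d where "x = qmul (Quat 2 2 0 0) (H122_coord a b c d)"
    by (auto simp: mem_I122_iff)
  then have "qcnj x = qmul (Quat 2 2 0 0) (H122_coord (- b) (- a) (- c) (- d))"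
    by (simp add: qcnj_def qmul_def H122_coord_def algebra_simps)
  then show ?thesis
    unfolding mem_I122_iff by blast
qed

lemma four_mem_I122: "qscale 4 q1 \<in> I122"
proof -
  have "qscale 4 q1 = qmul (Quat 2 2 0 0) (H122_coord 1 (- 1) 0 0)"
    by (simp add: qscale_def q1_def qmul_def H122_coord_def)
  then show ?thesis
    unfolding mem_I122_iff by blast
qed

lemma qsub_qcnj_q1: "qsub (qcnj x) q1 = qcnj (qsub x q1)"
  by (simp add: qsub_def qcnj_def qadd_def qneg_def q1_def)

lemma qsub_qneg_qcnj: "qsub (qneg (qcnj x)) c = qneg (qadd (qcnj (qsub x c)) (qadd c (qcnj c)))"
  by (simp add: qsub_def qneg_def qcnj_def qadd_def)

lemma qadd_qcnj_one_plus_two_v3: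
  "qadd (qadd q1 (qscale 2 v3)) (qcnj (qadd q1 (qscale 2 v3))) = qscale 4 q1"
  by (simp add: qadd_def qcnj_def qscale_def q1_def v3_def)

theorem lemma16:
  fixes b :: quat
  assumes "b \<in> H122" and "primary b"
  shows "(qsub b q1 \<in> I122 \<longrightarrow> primary (qcnj b))
       \<and> (qsub b (qadd q1 (qscale 2 v3)) \<in> I122 \<longrightarrow> primary (qneg (qcnj b)))"
proof (intro conjI impI)
  assume "qsub b q1 \<in> I122"
  then have "qsub (qcnj b) q1 \<in> I122"
    unfolding qsub_qcnj_q1 by (rule qcnj_mem_I122)
  then show "primary (qcnj b)"
    using qcnj_mem_H122[OF assms(1)] by (simp add: primary_def)
next
  let ?c = "qadd q1 (qscale 2 v3)"
  assume "qsub b ?c \<in> I122"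
  then have "qsub (qneg (qcnj b)) ?c \<in> I122"
    unfolding qsub_qneg_qcnj qadd_qcnj_one_plus_two_v3
    by (intro qneg_mem_I122 qadd_mem_I122 qcnj_mem_I122 four_mem_I122)
  then show "primary (qneg (qcnj b))"
    using qneg_mem_H122[OF qcnj_mem_H122[OF assms(1)]] by (simp add: primary_def)
qed

end
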